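(* Let $n\ge 1$, $k\ge 1$, and let $K=\sum_{i=1}^{k-1}|i-1\rangle\langle i|$ be the $k\times k$ nilpotent Jordan block acting on $\mathbb{C}^k$ with basis $|0\rangle,\ldots,|k-1\rangle$. Let $\mathcal{S}\subseteq(\mathbb{C}^k)^{\otimes n}$ be the permutation-symmetric subspace. For $0\le j\le k-1$ define $$|E_j\rangle=\sum_{\substack{i_1,\ldots,i_n\ge 0\\ i_1+\cdots+i_n=j}}|i_1\rangle|i_2\rangle\cdots|i_n\rangle.$$ Then a vector $|\psi\rangle\in\mathcal{S}$ satisfies $K_{(1)}|\psi\rangle\in\mathcal{S}$ if and only if $|\psi\rangle=\sum_{j=0}^{k-1}\alpha_j|E_j\rangle$ for some complex numbers $\alpha_0,\ldots,\alpha_{k-1}$.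
   Context: $\mathcal{S}$ is the set of vectors in $(\mathbb{C}^k)^{\otimes n}$ invariant under all permutations of the $n$ tensor factors. $K_{(1)}$ denotes $K\otimes\mathbb{I}\otimes\cdots\otimes\mathbb{I}$ on $(\mathbb{C}^k)^{\otimes n}$. *)

theory Defs
  imports Complex_Main "HOL-Combinatorics.Permutations"
begin

text \<open>A vector of (C^k)^{\<otimes>n} is represented by its coordinates in the
product basis |i_1>...|i_n>, i.e. as a function from index lists
(length n, entries < k) to complex numbers, vanishing off valid index lists.\<close>

definition idx :: "nat \<Rightarrow> nat \<Rightarrow> nat list set" where
  "idx n k = {xs. length xs = n \<and> set xs \<subseteq> {..<k}}"

definition tensor_space :: "nat \<Rightarrow> nat \<Rightarrow> (nat list \<Rightarrow> complex) set" where
  "tensor_space n k = {\<psi>. \<forall>xs. xs \<notin> idx n k \<longrightarrow> \<psi> xs = 0}"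

definition permute_factors :: "nat \<Rightarrow> (nat \<Rightarrow> nat) \<Rightarrow> nat list \<Rightarrow> nat list" where
  "permute_factors n p xs = map (\<lambda>i. xs ! p i) [0..<n]"

definition sym_subspace :: "nat \<Rightarrow> nat \<Rightarrow> (nat list \<Rightarrow> complex) set" where
  "sym_subspace n k = {\<psi> \<in> tensor_space n k.
     \<forall>p xs. p permutes {..<n} \<longrightarrow> xs \<in> idx n k \<longrightarrow> \<psi> (permute_factors n p xs) = \<psi> xs}"

text \<open>K = sum_{i=1}^{k-1} |i-1><i| applied to the first factor:
 (K_(1) psi)(i_1,i_2,...,i_n) = psi(i_1+1,i_2,...,i_n) if i_1+1 < k, else 0.\<close>
definition K1 :: "nat \<Rightarrow> nat \<Rightarrow> (nat list \<Rightarrow> complex) \<Rightarrow> nat list \<Rightarrow> complex" where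
  "K1 n k \<psi> xs = (if xs \<in> idx n k \<and> hd xs + 1 < k then \<psi> ((hd xs + 1) # tl xs) else 0)"

definition E :: "nat \<Rightarrow> nat \<Rightarrow> nat \<Rightarrow> nat list \<Rightarrow> complex" where
  "E n k j xs = (if xs \<in> idx n k \<and> sum_list xs = j then 1 else 0)"

end

theory Submission
  imports Defs
begin

text \<open>Symmetry under the transposition of the first and the (j+1)-st factor, together
with the same symmetry of K_(1) psi, lets one move a unit of index from any factor to the
first one: psi(a, .., b, ..) = K_(1) psi(b - 1, .., a, ..) = K_(1) psi(a, .., b - 1, ..)
= psi(a + 1, .., b - 1, ..), and this vanishes once a + 1 reaches k. Iterating, psi at an
index tuple depends only on i_1 + ... + i_n and vanishes when that sum is at least k,
which is exactly the span of the E_j. Conversely, K_(1) maps such a function to one that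
again depends only on the index sum, hence to a symmetric vector.\<close>

lemma permute_factors_transpose:
  assumes "length xs = n" "a < n" "b < n"
  shows "permute_factors n (Transposition.transpose a b) xs = xs[a := xs!b, b := xs!a]"
  using assms
  by (intro nth_equalityI) (auto simp: permute_factors_def nth_list_update transpose_def)

lemma permute_factors_in_idx:
  assumes "p permutes {..<n}" "xs \<in> idx n k"
  shows "permute_factors n p xs \<in> idx n k"
proof -
  have "\<And>i. i < n \<Longrightarrow> p i < n" using assms(1) permutes_in_image by fastforce
  then show ?thesis using assms(2)
    by (auto simp: idx_def permute_factors_def subset_iff)
qed

lemma sum_list_permute_factors:
  assumes "p permutes {..<n}" "length xs = n"
  shows "sum_list (permute_factors n p xs) = sum_list xs"
proof -
  have "sum_list (permute_factors n p xs) = (\<Sum>i<n. xs ! p i)"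
    by (simp add: permute_factors_def sum_list_sum_nth lessThan_atLeast0)
  also have "\<dots> = (\<Sum>i<n. xs ! i)"
    using sum.permute[OF assms(1), of "(!) xs"] by (simp add: comp_def)
  also have "\<dots> = sum_list xs" using assms(2)
    by (simp add: sum_list_sum_nth lessThan_atLeast0)
  finally show ?thesis .
qed

lemma idx_Cons_update:
  assumes "a # t \<in> idx n k" "b < k" "c < k"
  shows "b # t[j := c] \<in> idx n k"
  using assms set_update_subset_insert[of t j c] by (auto simp: idx_def)

lemma sum_dependent_in_sym_subspace:
  "(\<lambda>xs. if xs \<in> idx n k then f (sum_list xs) else 0) \<in> sym_subspace n k"
  using permute_factors_in_idx sum_list_permute_factors
  by (auto simp: sym_subspace_def tensor_space_def idx_def)

lemma E_combination_eq:
  "(\<lambda>xs. \<Sum>j<k. \<alpha> j * E n k j xs) =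
   (\<lambda>xs. if xs \<in> idx n k then (if sum_list xs < k then \<alpha> (sum_list xs) else 0) else 0)"
proof
  fix xs
  have "(\<Sum>j<k. \<alpha> j * E n k j xs) = (\<Sum>j<k. if xs \<in> idx n k \<and> sum_list xs = j then \<alpha> j else 0)"
    by (intro sum.cong) (auto simp: E_def)
  then show "(\<Sum>j<k. \<alpha> j * E n k j xs) =
      (if xs \<in> idx n k then (if sum_list xs < k then \<alpha> (sum_list xs) else 0) else 0)"
    by (simp add: sum.delta)
qed

lemma K1_truncated_sum_dependent:
  assumes "n \<ge> 1"
  shows "K1 n k (\<lambda>xs. if xs \<in> idx n k then (if sum_list xs < k then g (sum_list xs) else 0) else 0) =
    (\<lambda>xs. if xs \<in> idx n k then (if sum_list xs + 1 < k then g (sum_list xs + 1) else 0) else 0)"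
proof
  fix xs
  show "K1 n k (\<lambda>xs. if xs \<in> idx n k then (if sum_list xs < k then g (sum_list xs) else 0) else 0) xs =
    (if xs \<in> idx n k then (if sum_list xs + 1 < k then g (sum_list xs + 1) else 0) else 0)"
  proof (cases "xs \<in> idx n k")
    case True
    with assms obtain a t where xs: "xs = a # t"
      by (cases xs) (auto simp: idx_def)
    have "a + 1 < k \<Longrightarrow> (a + 1) # t \<in> idx n k"
      using True by (auto simp: xs idx_def)
    moreover have "sum_list xs + 1 < k \<Longrightarrow> a + 1 < k"
      by (simp add: xs)
    ultimately show ?thesis
      using True by (auto simp: K1_def xs)
  qed (simp add: K1_def)
qed

lemma sym_subspace_swap_head:
  assumes "\<phi> \<in> sym_subspace n k" "a # t \<in> idx n k" "j < length t"
  shows "\<phi> (a # t) = \<phi> ((t!j) # t[j := a])"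
proof -
  have len: "length (a # t) = n" using assms(2) by (simp add: idx_def)
  have "Transposition.transpose 0 (Suc j) permutes {..<n}"
    using len assms(3) by (intro permutes_swap_id) auto
  then have "\<phi> (permute_factors n (Transposition.transpose 0 (Suc j)) (a # t)) = \<phi> (a # t)"
    using assms(1,2) unfolding sym_subspace_def by blast
  then show ?thesis
    using permute_factors_transpose[OF len, of 0 "Suc j"] len assms(3) by simp
qed

lemma shift_unit_to_head:
  assumes S: "\<psi> \<in> sym_subspace n k" and KS: "K1 n k \<psi> \<in> sym_subspace n k"
    and v: "a # t \<in> idx n k" and j: "j < length t" and b: "t!j \<ge> 1"
  shows "\<psi> (a # t) = (if a + 1 < k then \<psi> ((a + 1) # t[j := t!j - 1]) else 0)"
proof -
  let ?b = "t!j"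
  have ak: "a < k" and bk: "?b < k"
    using v nth_mem[OF j] by (auto simp: idx_def)
  have "\<psi> (a # t) = \<psi> (?b # t[j := a])"
    using sym_subspace_swap_head[OF S v j] .
  also have "\<dots> = K1 n k \<psi> ((?b - 1) # t[j := a])"
    using idx_Cons_update[OF v _ ak, of "?b - 1"] b bk by (simp add: K1_def)
  also have "\<dots> = K1 n k \<psi> (a # t[j := ?b - 1])"
    using sym_subspace_swap_head[OF KS idx_Cons_update[OF v ak, of "?b - 1"], of j] j bk
    by simp
  also have "\<dots> = (if a + 1 < k then \<psi> ((a + 1) # t[j := ?b - 1]) else 0)"
    using idx_Cons_update[OF v ak, of "?b - 1" j] bk by (simp add: K1_def)
  finally show ?thesis .
qed

lemma sum_dependent_of_K1_sym:
  assumes n: "n \<ge> 1" and S: "\<psi> \<in> sym_subspace n k" and KS: "K1 n k \<psi> \<in> sym_subspace n k"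
  shows "xs \<in> idx n k \<Longrightarrow>
    \<psi> xs = (if sum_list xs < k then \<psi> (sum_list xs # replicate (n - 1) 0) else 0)"
proof (induction "sum_list (tl xs)" arbitrary: xs rule: less_induct)
  case less
  then obtain a t where xs: "xs = a # t" using n by (cases xs) (auto simp: idx_def)
  have v: "a # t \<in> idx n k" using less.prems xs by simp
  then have len: "length t = n - 1" by (auto simp: idx_def)
  show ?case
  proof (cases "\<forall>x\<in>set t. x = 0")
    case True
    then have "t = replicate (n - 1) 0"
      using len by (metis replicate_length_same)
    then show ?thesis using v True xs by (simp add: idx_def sum_list_replicate)
  next
    case False
    then obtain j where j: "j < length t" and b: "t!j \<ge> 1"
      by (metis in_set_conv_nth less_one not_le)
    have sum_update: "sum_list (t[j := t!j - 1]) + 1 = sum_list t"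
      using b elem_le_sum_list[OF j] sum_list_update[OF j, of "t!j - 1"] by simp
    show ?thesis
    proof (cases "a + 1 < k")
      case True
      let ?ys = "(a + 1) # t[j := t!j - 1]"
      have "t!j < k" using v nth_mem[OF j] by (auto simp: idx_def)
      then have "?ys \<in> idx n k"
        using idx_Cons_update[OF v True, of "t!j - 1" j] by simp
      moreover have "sum_list (tl ?ys) < sum_list (tl xs)"
        using sum_update xs by simp
      ultimately have IH: "\<psi> ?ys = (if sum_list ?ys < k then \<psi> (sum_list ?ys # replicate (n - 1) 0) else 0)"
        using less.hyps by blast
      have sum_ys: "sum_list ?ys = sum_list xs"
        using sum_update xs by simp
      have "\<psi> xs = \<psi> ?ys"
        using shift_unit_to_head[OF S KS v j b] True xs by simp
      then show ?thesis
        using IH unfolding sum_ys by simp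
    next
      case False
      then show ?thesis
        using shift_unit_to_head[OF S KS v j b] sum_update xs by simp
    qed
  qed
qed

theorem theorem5:
  fixes n k :: nat and \<psi> :: "nat list \<Rightarrow> complex"
  assumes "n \<ge> 1" and "k \<ge> 1"
    and "\<psi> \<in> sym_subspace n k"
  shows "K1 n k \<psi> \<in> sym_subspace n k \<longleftrightarrow>
         (\<exists>\<alpha> :: nat \<Rightarrow> complex. \<psi> = (\<lambda>xs. \<Sum>j<k. \<alpha> j * E n k j xs))"
proof
  assume KS: "K1 n k \<psi> \<in> sym_subspace n k"
  define \<alpha> where "\<alpha> j = \<psi> (j # replicate (n - 1) 0)" for j
  have "\<psi> xs = (if xs \<in> idx n k then (if sum_list xs < k then \<alpha> (sum_list xs) else 0) else 0)" for xs
    using sum_dependent_of_K1_sym[OF assms(1,3) KS, of xs] assms(3)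
    by (auto simp: \<alpha>_def sym_subspace_def tensor_space_def)
  then show "\<exists>\<alpha>. \<psi> = (\<lambda>xs. \<Sum>j<k. \<alpha> j * E n k j xs)"
    unfolding E_combination_eq by blast
next
  assume "\<exists>\<alpha>. \<psi> = (\<lambda>xs. \<Sum>j<k. \<alpha> j * E n k j xs)"
  then obtain \<alpha> where "\<psi> = (\<lambda>xs. \<Sum>j<k. \<alpha> j * E n k j xs)" by blast
  then show "K1 n k \<psi> \<in> sym_subspace n k"
    using sum_dependent_in_sym_subspace[of n k "\<lambda>s. if s + 1 < k then \<alpha> (s + 1) else 0"]
    by (simp only: E_combination_eq K1_truncated_sum_dependent[OF assms(1)])
qed

end
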